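(* Let $L_1,L_2,L_3$ be three lines in $\mathbb{R}^2$ and let $\Delta$ be a (2-dimensional) cell of their arrangement, i.e. a connected component of $\mathbb{R}^2\setminus(L_1\cup L_2\cup L_3)$. For $i=1,2,3$ let $L_i^-$ and $L_i^+$ be the two open halfplanes of $\mathbb{R}^2\setminus L_i$, labeled so that $\Delta\subset L_i^-$. Suppose that each $L_i$ contains a boundary edge $e_i$ of $\Delta$, and that $e_1,e_2,e_3$ appear in this clockwise order along the boundary of $\Delta$. Then for every convex set $K$ that meets all three edges $e_1,e_2,e_3$, and every point $p\in K\cap L_1^+\cap L_2^-\cap L_3^-$, the segment connecting the point $L_2\cap L_3$ to $p$ crosses $L_1$ at a point of the interval $K\cap L_1$. *)

theory Defs
  imports "HOL-Analysis.Analysis"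
begin

definition line_of :: "real^2 \<Rightarrow> real \<Rightarrow> (real^2) set" where
  "line_of a b = {x. a \<bullet> x = b}"

definition lower_half :: "real^2 \<Rightarrow> real \<Rightarrow> (real^2) set" where
  "lower_half a b = {x. a \<bullet> x < b}"

definition upper_half :: "real^2 \<Rightarrow> real \<Rightarrow> (real^2) set" where
  "upper_half a b = {x. a \<bullet> x > b}"

text \<open>2D cross product (determinant); positive means counterclockwise.\<close>
definition cross2 :: "real^2 \<Rightarrow> real^2 \<Rightarrow> real" where
  "cross2 u v = u$1 * v$2 - u$2 * v$1"

text \<open>A (closed) boundary edge of the cell D lying on the line L: the part of
  the boundary of D on L, required to be one-dimensional (more than one point).\<close>
definition boundary_edge :: "(real^2) set \<Rightarrow> (real^2) set \<Rightarrow> (real^2) set \<Rightarrow> bool" where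
  "boundary_edge D L e \<longleftrightarrow> e = frontier D \<inter> L \<and> (\<exists>x y. x \<in> e \<and> y \<in> e \<and> x \<noteq> y)"

text \<open>The edges e1, e2, e3 appear in this clockwise order along the boundary of D:
  there is a simple arc in the boundary of D, traversed clockwise (i.e. turning
  clockwise around a point of D), which meets e1, then e2, then e3.\<close>
definition clockwise_along_boundary ::
  "(real^2) set \<Rightarrow> (real^2) set \<Rightarrow> (real^2) set \<Rightarrow> (real^2) set \<Rightarrow> bool" where
  "clockwise_along_boundary D e1 e2 e3 \<longleftrightarrow>
     (\<exists>\<gamma> t1 t2 t3 c.
        path \<gamma> \<and> inj_on \<gamma> {0..1} \<and> path_image \<gamma> \<subseteq> frontier D \<and>
        0 \<le> t1 \<and> t1 < t2 \<and> t2 < t3 \<and> t3 \<le> 1 \<and>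
        \<gamma> t1 \<in> e1 \<and> \<gamma> t2 \<in> e2 \<and> \<gamma> t3 \<in> e3 \<and>
        c \<in> D \<and>
        (\<forall>t\<in>{0..<1}. \<forall>\<^sub>F s in at_right t. cross2 (\<gamma> t - c) (\<gamma> s - c) < 0))"

end

theory Submission
  imports Defs
begin

text \<open>Write \<open>s\<^sub>i x = b\<^sub>i - a\<^sub>i \<bullet> x\<close>; the closure of the cell D satisfies \<open>s\<^sub>i \<ge> 0\<close>.
  Since L2 and L3 cross at q, \<open>s1 = s1 q + k2 s2 + k3 s3\<close> for suitable \<open>k2, k3\<close>.
  The heart of the matter is that q lies strictly on D's side of L1.  Otherwise the two edges on
  L2 and L3 force \<open>k2, k3 > 0\<close>, so D is the unbounded region cut off by the segment on L1, and
  along its boundary the function \<open>s2 - s3\<close> is injective and increases through the pieces on L2,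
  L1 and L3 in this order; a simple boundary arc meeting e1, e2, e3 in this order would make the
  continuous injective \<open>s2 - s3\<close> non-monotone.
  Once q is on D's side of L1, a point x2 of K on e2 and x3 of K on e3 lie on opposite sides of the
  ray from q through p, so \<open>[x2, x3] \<subseteq> K\<close> meets that ray in a point w, which lies in the closed
  halfplane of L1 containing q.  The crossing of \<open>[q, p]\<close> with L1 then lies in \<open>[w, p] \<subseteq> K\<close>.\<close>

lemma inner_vec2: "(a::real^2) \<bullet> x = a$1 * x$1 + a$2 * x$2"
  by (simp add: inner_vec_def sum_2)

lemma cross2_inner_identity:
  "cross2 a2 a3 * (a1 \<bullet> x) = cross2 a1 a3 * (a2 \<bullet> x) + cross2 a2 a1 * (a3 \<bullet> x)"
  by (simp add: inner_vec2 cross2_def algebra_simps)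

lemma eq_if_inner_eq_cross2_nonzero:
  fixes a2 a3 x y :: "real^2"
  assumes "cross2 a2 a3 \<noteq> 0" "a2 \<bullet> x = a2 \<bullet> y" "a3 \<bullet> x = a3 \<bullet> y"
  shows "x = y"
proof -
  have "cross2 a2 a3 * ((x - y) \<bullet> (x - y)) = 0"
    using cross2_inner_identity[of a2 a3 "x - y" "x - y"] assms(2,3)
    by (simp add: inner_diff_right)
  then show ?thesis using assms(1) by simp
qed

lemma cross2_nonzero_if_lines_meet_in_point:
  fixes a2 a3 q :: "real^2"
  assumes "a2 \<noteq> 0" "line_of a2 b2 \<inter> line_of a3 b3 = {q}"
  shows "cross2 a2 a3 \<noteq> 0"
proof
  assume cross: "cross2 a2 a3 = 0"
  define d :: "real^2" where "d = vector [- a2$2, a2$1]"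
  have "d \<bullet> d = a2 \<bullet> a2"
    by (simp add: d_def inner_vec2 algebra_simps)
  then have "d \<noteq> 0" using assms(1) by auto
  have "a2 \<bullet> d = 0" "a3 \<bullet> d = 0"
    using cross by (simp_all add: d_def inner_vec2 cross2_def algebra_simps)
  moreover have "a2 \<bullet> q = b2" "a3 \<bullet> q = b3" using assms(2) by (auto simp: line_of_def)
  ultimately have "q + d \<in> line_of a2 b2 \<inter> line_of a3 b3"
    by (simp add: line_of_def inner_add_right)
  then show False using assms(2) \<open>d \<noteq> 0\<close> by auto
qed

lemma line_of_eq_if_affine_multiple:
  fixes a a' :: "real^2"
  assumes "a \<noteq> 0" "\<And>x. b - a \<bullet> x = k * (b' - a' \<bullet> x)"
  shows "line_of a b = line_of a' b'"
proof -
  have "k \<noteq> 0"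
  proof
    assume "k = 0"
    then have on_line: "a \<bullet> x = b" for x using assms(2)[of x] by simp
    have "a \<bullet> a = 0" using on_line[of 0] on_line[of a] by simp
    then show False using assms(1) by simp
  qed
  then have "a \<bullet> x = b \<longleftrightarrow> a' \<bullet> x = b'" for x
    using assms(2)[of x] by (metis eq_iff_diff_eq_0 mult_eq_0_iff)
  then show ?thesis unfolding line_of_def by blast
qed

lemma boundary_coordinates_determined_by_difference:
  fixes k2 k3 m u v u' v' :: real
  assumes k: "k2 > 0" "k3 > 0"
    and "0 \<le> u" "0 \<le> v" "0 \<le> m + k2 * u + k3 * v" "u = 0 \<or> v = 0 \<or> m + k2 * u + k3 * v = 0"
    and "0 \<le> u'" "0 \<le> v'" "0 \<le> m + k2 * u' + k3 * v'" "u' = 0 \<or> v' = 0 \<or> m + k2 * u' + k3 * v' = 0"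
    and "u - v = u' - v'"
  shows "u = u' \<and> v = v'"
proof -
  have le: "x' \<le> x"
    if "0 \<le> m + k2 * x + k3 * y" "0 \<le> x" "0 \<le> y"
      "x' = 0 \<or> y' = 0 \<or> m + k2 * x' + k3 * y' = 0" "x - y = x' - y'"
    for x y x' y' :: real
  proof (rule ccontr)
    assume "\<not> x' \<le> x"
    then have d: "x' - x > 0" by simp
    then have "m + k2 * x' + k3 * y' = 0" using that by auto
    moreover have "(k2 + k3) * (x' - x) > 0" using k d by simp
    moreover have "m + k2 * x + k3 * y = m + k2 * x' + k3 * y' - (k2 + k3) * (x' - x)"
      using that(5) by algebra
    ultimately have "m + k2 * x + k3 * y < 0" by simp
    then show False using that(1) by simp
  qed
  show ?thesis using le[of u v u' v'] le[of u' v' u v] assms by auto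
qed

lemma closed_segment_inter_line_singleton:
  fixes a p q :: "real^2"
  assumes "a \<bullet> q < b" "b < a \<bullet> p"
  shows "\<exists>c. closed_segment q p \<inter> line_of a b = {c}"
proof -
  obtain c where c: "c \<in> closed_segment q p" "a \<bullet> c = b"
    using connected_ivt_hyperplane[OF connected_segment, where x=q and y=p and a=a and b=b] assms by auto
  have "x = c" if x: "x \<in> closed_segment q p" "a \<bullet> x = b" for x
  proof -
    have param: "a \<bullet> y = a \<bullet> q + s * (a \<bullet> p - a \<bullet> q)" if "y = (1 - s) *\<^sub>R q + s *\<^sub>R p" for y s
      unfolding that by (simp add: inner_add_right algebra_simps)
    obtain s where s: "x = (1 - s) *\<^sub>R q + s *\<^sub>R p" using x(1) by (auto simp: in_segment)
    obtain s' where s': "c = (1 - s') *\<^sub>R q + s' *\<^sub>R p" using c(1) by (auto simp: in_segment)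
    have "s * (a \<bullet> p - a \<bullet> q) = s' * (a \<bullet> p - a \<bullet> q)"
      using param[OF s] param[OF s'] x(2) c(2) by simp
    then have "s = s'" using assms by simp
    then show ?thesis using s s' by simp
  qed
  then show ?thesis using c by (auto simp: line_of_def)
qed

lemma segment_from_corner_crosses_line_in_convex:
  fixes a1 a2 a3 p q x2 x3 :: "real^2"
  assumes cross: "cross2 a2 a3 \<noteq> 0" and q: "a2 \<bullet> q = b2" "a3 \<bullet> q = b3" "a1 \<bullet> q < b1"
    and K: "convex K"
    and p: "p \<in> K" "b1 < a1 \<bullet> p" "a2 \<bullet> p < b2" "a3 \<bullet> p < b3"
    and x2: "x2 \<in> K" "a1 \<bullet> x2 \<le> b1" "a2 \<bullet> x2 = b2" "a3 \<bullet> x2 \<le> b3"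
    and x3: "x3 \<in> K" "a1 \<bullet> x3 \<le> b1" "a2 \<bullet> x3 \<le> b2" "a3 \<bullet> x3 = b3"
  shows "\<exists>c. closed_segment q p \<inter> line_of a1 b1 = {c} \<and> c \<in> K"
proof -
  define u where "u = b2 - a2 \<bullet> p"
  define v where "v = b3 - a3 \<bullet> p"
  have uv: "u > 0" "v > 0" using p by (simp_all add: u_def v_def)
  \<comment> \<open>\<open>n \<bullet> x = m\<close> says that \<open>(b2 - a2 \<bullet> x, b3 - a3 \<bullet> x)\<close> is proportional to \<open>(u, v)\<close>,
    i.e.\ that x lies on the line through q and p.\<close>
  define n where "n = u *\<^sub>R a3 - v *\<^sub>R a2"
  define m where "m = u * b3 - v * b2"
  have "n \<bullet> x2 \<le> m" "m \<le> n \<bullet> x3"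
    using x2 x3 uv by (simp_all add: n_def m_def inner_diff_left algebra_simps)
  then obtain w where w: "w \<in> closed_segment x2 x3" "n \<bullet> w = m"
    using connected_ivt_hyperplane[OF connected_segment, where x=x2 and y=x3 and a=n and b=m] by auto
  have "w \<in> K" using w(1) K x2(1) x3(1) by (meson closed_segment_subset subsetD)
  have halfplane: "a \<bullet> w \<le> b" if "a \<bullet> x2 \<le> b" "a \<bullet> x3 \<le> b" for a :: "real^2" and b
    using closed_segment_subset[OF _ _ convex_halfspace_le, of x2 a b x3] w(1) that by auto
  define \<mu> where "\<mu> = (b2 - a2 \<bullet> w) / u"
  have "\<mu> \<ge> 0" using halfplane[of a2 b2] x2 x3 uv by (simp add: \<mu>_def)
  have w_ray: "w = q + \<mu> *\<^sub>R (p - q)"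
  proof (rule eq_if_inner_eq_cross2_nonzero[OF cross])
    have "a2 \<bullet> (q + \<mu> *\<^sub>R (p - q)) = b2 - \<mu> * u"
      by (simp add: inner_add_right inner_diff_right q u_def algebra_simps)
    then show "a2 \<bullet> w = a2 \<bullet> (q + \<mu> *\<^sub>R (p - q))"
      using uv by (simp add: \<mu>_def)
    have "u * (b3 - a3 \<bullet> w) = v * (b2 - a2 \<bullet> w)"
      using w(2) by (simp add: n_def m_def inner_diff_left algebra_simps)
    then have "\<mu> * v = b3 - a3 \<bullet> w"
      using uv by (simp add: \<mu>_def field_simps)
    moreover have "a3 \<bullet> (q + \<mu> *\<^sub>R (p - q)) = b3 - \<mu> * v"
      by (simp add: inner_add_right inner_diff_right q v_def algebra_simps)
    ultimately show "a3 \<bullet> w = a3 \<bullet> (q + \<mu> *\<^sub>R (p - q))" by simp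
  qed
  have "a1 \<bullet> q + \<mu> * (a1 \<bullet> p - a1 \<bullet> q) \<le> b1"
    using halfplane[of a1 b1] x2 x3 w_ray by (simp add: inner_add_right inner_diff_right algebra_simps)
  then have "\<mu> * (a1 \<bullet> p - a1 \<bullet> q) < 1 * (a1 \<bullet> p - a1 \<bullet> q)" using p(2) by simp
  then have "\<mu> < 1" using q(3) p(2) by (simp add: mult_less_cancel_right)
  then have "w \<in> closed_segment q p"
    using \<open>\<mu> \<ge> 0\<close> w_ray by (auto simp: in_segment algebra_simps intro!: exI[of _ \<mu>])
  obtain c where c: "closed_segment q p \<inter> line_of a1 b1 = {c}"
    using closed_segment_inter_line_singleton q(3) p(2) by blast
  obtain c' where c': "c' \<in> closed_segment w p" "a1 \<bullet> c' = b1"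
    using connected_ivt_hyperplane[OF connected_segment, where x=w and y=p and a=a1 and b=b1]
      halfplane[of a1 b1] x2 x3 p(2) by auto
  have "c' \<in> closed_segment q p"
    using c'(1) \<open>w \<in> closed_segment q p\<close> subset_closed_segment by blast
  then have "c' = c" using c c'(2) by (auto simp: line_of_def)
  moreover have "c' \<in> K" using c'(1) K \<open>w \<in> K\<close> p(1) by (meson closed_segment_subset subsetD)
  ultimately show ?thesis using c by blast
qed

locale three_line_cell =
  fixes a1 a2 a3 :: "real^2" and b1 b2 b3 :: real and D :: "(real^2) set" and q :: "real^2"
  assumes a1_nonzero: "a1 \<noteq> 0" and a2_nonzero: "a2 \<noteq> 0"
    and lines_12: "line_of a1 b1 \<noteq> line_of a2 b2" and lines_13: "line_of a1 b1 \<noteq> line_of a3 b3"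
    and cell: "D \<in> components (- (line_of a1 b1 \<union> line_of a2 b2 \<union> line_of a3 b3))"
    and side: "D \<subseteq> lower_half a1 b1" "D \<subseteq> lower_half a2 b2" "D \<subseteq> lower_half a3 b3"
    and apex: "line_of a2 b2 \<inter> line_of a3 b3 = {q}"
begin

definition s1 :: "real^2 \<Rightarrow> real" where "s1 x = b1 - a1 \<bullet> x"
definition s2 :: "real^2 \<Rightarrow> real" where "s2 x = b2 - a2 \<bullet> x"
definition s3 :: "real^2 \<Rightarrow> real" where "s3 x = b3 - a3 \<bullet> x"

definition k2 :: real where "k2 = cross2 a1 a3 / cross2 a2 a3"
definition k3 :: real where "k3 = cross2 a2 a1 / cross2 a2 a3"

lemma cross2_a2_a3_nonzero: "cross2 a2 a3 \<noteq> 0"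
  using cross2_nonzero_if_lines_meet_in_point[OF a2_nonzero apex] .

lemma apex_on_lines: "a2 \<bullet> q = b2" "a3 \<bullet> q = b3"
  using apex by (auto simp: line_of_def)

lemma s1_decomposition: "s1 x = s1 q + k2 * s2 x + k3 * s3 x"
proof -
  have "a1 \<bullet> y = k2 * (a2 \<bullet> y) + k3 * (a3 \<bullet> y)" for y
    using cross2_inner_identity[of a2 a3 a1 y] cross2_a2_a3_nonzero
    by (simp add: k2_def k3_def field_simps)
  then show ?thesis by (simp add: s1_def s2_def s3_def apex_on_lines algebra_simps)
qed

lemma eq_if_s2_s3_eq: "s2 x = s2 y \<Longrightarrow> s3 x = s3 y \<Longrightarrow> x = y"
  using eq_if_inner_eq_cross2_nonzero[OF cross2_a2_a3_nonzero] by (simp add: s2_def s3_def)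

lemma frontier_cell:
  assumes "x \<in> frontier D"
  shows "0 \<le> s1 x \<and> 0 \<le> s2 x \<and> 0 \<le> s3 x \<and> (s1 x = 0 \<or> s2 x = 0 \<or> s3 x = 0)"
proof -
  define T where "T = lower_half a1 b1 \<inter> lower_half a2 b2 \<inter> lower_half a3 b3"
  have "open (- (line_of a1 b1 \<union> line_of a2 b2 \<union> line_of a3 b3))"
    by (intro open_Compl closed_Un) (simp_all add: line_of_def closed_hyperplane)
  then have "open D" using open_components cell by blast
  have "T \<subseteq> D"
  proof (rule components_maximal[OF cell])
    show "connected T" unfolding T_def lower_half_def
      by (intro convex_connected convex_Int convex_halfspace_lt)
    show "T \<subseteq> - (line_of a1 b1 \<union> line_of a2 b2 \<union> line_of a3 b3)"
      by (auto simp: T_def lower_half_def line_of_def)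
    show "D \<inter> T \<noteq> {}" using in_components_nonempty[OF cell] side by (auto simp: T_def)
  qed
  have "closure D \<subseteq> {x. a1 \<bullet> x \<le> b1 \<and> a2 \<bullet> x \<le> b2 \<and> a3 \<bullet> x \<le> b3}"
    using side by (intro closure_minimal closed_Collect_conj closed_halfspace_le)
      (force simp: lower_half_def)+
  moreover have "x \<in> closure D" "x \<notin> T"
    using assms \<open>open D\<close> \<open>T \<subseteq> D\<close> by (auto simp: frontier_def interior_open)
  ultimately show ?thesis by (auto simp: T_def lower_half_def s1_def s2_def s3_def)
qed

lemma frontier_point_on_L2_off_L3:
  assumes "boundary_edge D (line_of a2 b2) e2"
  obtains y where "y \<in> frontier D" "s2 y = 0" "s3 y > 0"
proof -
  obtain y1 y2 where "y1 \<in> frontier D \<inter> line_of a2 b2" "y2 \<in> frontier D \<inter> line_of a2 b2" "y1 \<noteq> y2"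
    using assms unfolding boundary_edge_def by blast
  then have y: "y1 \<in> frontier D" "y2 \<in> frontier D" "s2 y1 = 0" "s2 y2 = 0" "y1 \<noteq> y2"
    by (auto simp: line_of_def s2_def)
  then have "s3 y1 \<noteq> s3 y2" using eq_if_s2_s3_eq by auto
  then have "s3 y1 > 0 \<or> s3 y2 > 0" using frontier_cell[OF y(1)] frontier_cell[OF y(2)] by linarith
  then show ?thesis using that y by blast
qed

lemma frontier_point_on_L3_off_L2:
  assumes "boundary_edge D (line_of a3 b3) e3"
  obtains z where "z \<in> frontier D" "s3 z = 0" "s2 z > 0"
proof -
  obtain z1 z2 where "z1 \<in> frontier D \<inter> line_of a3 b3" "z2 \<in> frontier D \<inter> line_of a3 b3" "z1 \<noteq> z2"
    using assms unfolding boundary_edge_def by blast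
  then have z: "z1 \<in> frontier D" "z2 \<in> frontier D" "s3 z1 = 0" "s3 z2 = 0" "z1 \<noteq> z2"
    by (auto simp: line_of_def s3_def)
  then have "s2 z1 \<noteq> s2 z2" using eq_if_s2_s3_eq by auto
  then have "s2 z1 > 0 \<or> s2 z2 > 0" using frontier_cell[OF z(1)] frontier_cell[OF z(2)] by linarith
  then show ?thesis using that z by blast
qed

lemma coefficients_pos_if_apex_not_in_lower_half:
  assumes "s1 q \<le> 0"
    and "boundary_edge D (line_of a2 b2) e2" "boundary_edge D (line_of a3 b3) e3"
  shows "k2 > 0 \<and> k3 > 0"
proof -
  obtain y where y: "y \<in> frontier D" "s2 y = 0" "s3 y > 0"
    using frontier_point_on_L2_off_L3[OF assms(2)] .
  obtain z where z: "z \<in> frontier D" "s3 z = 0" "s2 z > 0"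
    using frontier_point_on_L3_off_L2[OF assms(3)] .
  have "0 \<le> s1 q + k3 * s3 y" using frontier_cell[OF y(1)] s1_decomposition[of y] y(2) by simp
  moreover have "0 \<le> s1 q + k2 * s2 z" using frontier_cell[OF z(1)] s1_decomposition[of z] z(2) by simp
  ultimately have "0 \<le> k3 * s3 y" "0 \<le> k2 * s2 z" and apex_zero: "k3 = 0 \<or> k2 = 0 \<Longrightarrow> s1 q = 0"
    using assms(1) by auto
  then have k: "k3 \<ge> 0" "k2 \<ge> 0" using y(3) z(3) by (simp_all add: zero_le_mult_iff)
  have "k3 \<noteq> 0"
  proof
    assume "k3 = 0"
    then have "b1 - a1 \<bullet> x = k2 * (b2 - a2 \<bullet> x)" for x
      using s1_decomposition[of x] apex_zero by (simp add: s1_def s2_def)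
    then show False using line_of_eq_if_affine_multiple a1_nonzero lines_12 by blast
  qed
  moreover have "k2 \<noteq> 0"
  proof
    assume "k2 = 0"
    then have "b1 - a1 \<bullet> x = k3 * (b3 - a3 \<bullet> x)" for x
      using s1_decomposition[of x] apex_zero by (simp add: s1_def s3_def)
    then show False using line_of_eq_if_affine_multiple a1_nonzero lines_13 by blast
  qed
  ultimately show ?thesis using k by simp
qed

lemma inj_on_frontier_s2_minus_s3:
  assumes "k2 > 0" "k3 > 0"
  shows "inj_on (\<lambda>x. s2 x - s3 x) (frontier D)"
proof (rule inj_onI)
  fix x y assume x: "x \<in> frontier D" and y: "y \<in> frontier D" and "s2 x - s3 x = s2 y - s3 y"
  then have "s2 x = s2 y \<and> s3 x = s3 y"
    using boundary_coordinates_determined_by_difference[OF assms, of "s2 x" "s3 x" "s1 q"]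
      frontier_cell[OF x] frontier_cell[OF y] s1_decomposition by metis
  then show "x = y" using eq_if_s2_s3_eq by blast
qed

lemma apex_in_lower_half:
  assumes edges: "boundary_edge D (line_of a1 b1) e1" "boundary_edge D (line_of a2 b2) e2"
      "boundary_edge D (line_of a3 b3) e3"
    and order: "clockwise_along_boundary D e1 e2 e3"
  shows "s1 q > 0"
proof (rule ccontr)
  assume "\<not> s1 q > 0"
  then have k: "k2 > 0" "k3 > 0"
    using coefficients_pos_if_apex_not_in_lower_half edges(2,3) by force+
  obtain \<gamma> t1 t2 t3 where \<gamma>: "path \<gamma>" "inj_on \<gamma> {0..1}" "path_image \<gamma> \<subseteq> frontier D"
      and t: "0 \<le> t1" "t1 < t2" "t2 < t3" "t3 \<le> 1" "\<gamma> t1 \<in> e1" "\<gamma> t2 \<in> e2" "\<gamma> t3 \<in> e3"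
    using order unfolding clockwise_along_boundary_def by blast
  define G where "G t = s2 (\<gamma> t) - s3 (\<gamma> t)" for t
  have sub: "{t1..t3} \<subseteq> {0..1}" using t by auto
  have "continuous_on {t1..t3} G"
    using \<gamma>(1) continuous_on_subset[OF _ sub] unfolding G_def path_def s2_def s3_def
    by (intro continuous_intros) auto
  moreover have "inj_on G {t1..t3}"
  proof (rule inj_onI)
    fix s s' assume s: "s \<in> {t1..t3}" "s' \<in> {t1..t3}" "G s = G s'"
    moreover have "\<gamma> s \<in> frontier D" "\<gamma> s' \<in> frontier D"
      using \<gamma>(3) s sub by (auto simp: path_image_def)
    ultimately have "\<gamma> s = \<gamma> s'"
      using inj_onD[OF inj_on_frontier_s2_minus_s3[OF k]] by (simp add: G_def)
    then show "s = s'" using inj_onD[OF \<gamma>(2)] s sub by auto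
  qed
  ultimately have mono: "G t1 < G t2 \<and> G t2 < G t3 \<or> G t3 < G t2 \<and> G t2 < G t1"
    using continuous_inj_imp_mono t(2,3) by blast
  have on_edge: "\<gamma> t1 \<in> frontier D" "s1 (\<gamma> t1) = 0" "\<gamma> t2 \<in> frontier D" "s2 (\<gamma> t2) = 0"
      "\<gamma> t3 \<in> frontier D" "s3 (\<gamma> t3) = 0"
    using t(5-7) edges by (auto simp: boundary_edge_def line_of_def s1_def s2_def s3_def)
  have "G t2 \<le> G t3"
    using frontier_cell[OF on_edge(3)] frontier_cell[OF on_edge(5)] on_edge by (simp add: G_def)
  moreover have "G t2 \<le> G t1"
  proof -
    have "0 \<le> s1 q + k3 * s3 (\<gamma> t2)"
      using frontier_cell[OF on_edge(3)] s1_decomposition[of "\<gamma> t2"] on_edge(4) by simp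
    moreover have "s1 q + k2 * s2 (\<gamma> t1) + k3 * s3 (\<gamma> t1) = 0"
      using on_edge(2) s1_decomposition[of "\<gamma> t1"] by simp
    moreover have "0 \<le> s2 (\<gamma> t1)" using frontier_cell[OF on_edge(1)] by simp
    moreover have "k3 * (G t1 - G t2) = (s1 q + k3 * s3 (\<gamma> t2)) + (k2 + k3) * s2 (\<gamma> t1)"
      using calculation(2) on_edge(4) by (simp add: G_def algebra_simps)
    ultimately have "0 \<le> k3 * (G t1 - G t2)" using k by simp
    then show ?thesis using k by (simp add: zero_le_mult_iff)
  qed
  ultimately show False using mono by linarith
qed

end

theorem mainTheorem2:
  fixes a1 a2 a3 :: "real^2" and b1 b2 b3 :: real
    and D e1 e2 e3 K :: "(real^2) set" and p q :: "real^2"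
  assumes nz: "a1 \<noteq> 0" "a2 \<noteq> 0" "a3 \<noteq> 0"
    and distinct: "line_of a1 b1 \<noteq> line_of a2 b2" "line_of a1 b1 \<noteq> line_of a3 b3"
                  "line_of a2 b2 \<noteq> line_of a3 b3"
    and cell: "D \<in> components (- (line_of a1 b1 \<union> line_of a2 b2 \<union> line_of a3 b3))"
    and side: "D \<subseteq> lower_half a1 b1" "D \<subseteq> lower_half a2 b2" "D \<subseteq> lower_half a3 b3"
    and edges: "boundary_edge D (line_of a1 b1) e1" "boundary_edge D (line_of a2 b2) e2"
               "boundary_edge D (line_of a3 b3) e3"
    and order: "clockwise_along_boundary D e1 e2 e3"
    and q: "line_of a2 b2 \<inter> line_of a3 b3 = {q}"
    and K: "convex K" "K \<inter> e1 \<noteq> {}" "K \<inter> e2 \<noteq> {}" "K \<inter> e3 \<noteq> {}"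
    and p: "p \<in> K" "p \<in> upper_half a1 b1" "p \<in> lower_half a2 b2" "p \<in> lower_half a3 b3"
  shows "\<exists>c. closed_segment q p \<inter> line_of a1 b1 = {c} \<and> c \<in> K"
proof -
  \<comment> \<open>K need not meet e1: points of K on e2 and e3 suffice.\<close>
  interpret three_line_cell a1 a2 a3 b1 b2 b3 D q
    using nz(1,2) distinct(1,2) cell side q by unfold_locales
  have "a1 \<bullet> q < b1" using apex_in_lower_half[OF edges order] by (simp add: s1_def)
  obtain x2 where x2: "x2 \<in> K" "x2 \<in> frontier D" "a2 \<bullet> x2 = b2"
    using K(3) edges(2) by (auto simp: boundary_edge_def line_of_def)
  obtain x3 where x3: "x3 \<in> K" "x3 \<in> frontier D" "a3 \<bullet> x3 = b3"
    using K(4) edges(3) by (auto simp: boundary_edge_def line_of_def)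
  show ?thesis
    using segment_from_corner_crosses_line_in_convex[OF cross2_a2_a3_nonzero apex_on_lines
        \<open>a1 \<bullet> q < b1\<close> K(1) p(1) _ _ _ x2(1) _ x2(3) _ x3(1) _ _ x3(3)]
      frontier_cell[OF x2(2)] frontier_cell[OF x3(2)] p(2-4)
    by (simp add: s1_def s2_def s3_def upper_half_def lower_half_def)
qed

end
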